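(* For $1\le m<n$ and every bounded continuous $f:\mathbb R^m\to\mathbb R$, \[\mathbb E\big[f(\hat D_1,\dots,\hat D_m)\mathbf 1\{N^n\ge m\}\big]=\mathbb E\big[f(\xi_1^*,\dots,\xi_m^* )\,\Theta_m^n(\xi_1^*,\dots,\xi_m^* )\big],\] where \[\Theta_m^n(k_1,\dots,k_m)=\frac{\mathbb P\big(\Xi_{n-m}=n-1-\sum_{i=1}^mk_i\big)}{\mathbb P(\Xi_n=n-1)}\prod_{i=1}^m\frac{n-i+1}{n-1-\sum_{j=1}^{i-1}k_j}.\]
   Context: Let $\xi$ be an $\mathbb N_0$-valued random variable with $\mathbb E[\xi]=1$ and $\gcd\{k:\mathbb P(\xi=k)>0\}=1$; let $\Xi_r$ denote a sum of $r$ i.i.d. copies of $\xi$, and let $n$ be such that $\mathbb P(\Xi_n=n-1)>0$. Let $\xi_1^*,\xi_2^*,\dots$ be i.i.d. with the size-biased law $\mathbb P(\xi^*=k)=k\,\mathbb P(\xi=k)$. Let $\mathbf D=(D_1,\dots,D_n)$ have the law of $n$ i.i.d. copies of $\xi$ conditioned to have sum $n-1$, and, conditionally on $\mathbf D$, let $w=(w_1,\dots,w_{n-1})$ be uniform on the set of sequences in $[n]^{n-1}$ in which each $i\in[n]$ appears exactly $D_i$ times. Let $M$ be the number of distinct entries of $w$ (equal to $N^n:=\#\{i:D_i>0\}$). Define $I_1=1$ and $I_{k+1}=\min\{i:w_i\notin\{w_{I_1},\dots,w_{I_k}\}\}$ for $k<M$, set $\Sigma(k)=w_{I_k}$, and $\hat{\mathbf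 D}=(\hat D_1,\dots,\hat D_n)=(D_{\Sigma(1)},\dots,D_{\Sigma(M)},0,\dots,0)$. *)

theory Defs
  imports "HOL-Probability.Probability"
begin

definition Xi_pmf :: "nat pmf \<Rightarrow> nat \<Rightarrow> nat pmf" where
  "Xi_pmf p r = map_pmf (\<lambda>x. \<Sum>i\<in>{1..r}. x i) (Pi_pmf {1..r} 0 (\<lambda>_. p))"

definition size_biased :: "nat pmf \<Rightarrow> nat pmf" where
  "size_biased p = embed_pmf (\<lambda>k. real k * pmf p k)"

definition D_pmf :: "nat pmf \<Rightarrow> nat \<Rightarrow> (nat \<Rightarrow> nat) pmf" where
  "D_pmf p n = cond_pmf (Pi_pmf {1..n} 0 (\<lambda>_. p)) {d. (\<Sum>i\<in>{1..n}. d i) = n - 1}"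

definition words :: "nat \<Rightarrow> (nat \<Rightarrow> nat) \<Rightarrow> nat list set" where
  "words n d = {w. length w = n - 1 \<and> set w \<subseteq> {1..n} \<and> (\<forall>i\<in>{1..n}. count_list w i = d i)}"

definition Dw_pmf :: "nat pmf \<Rightarrow> nat \<Rightarrow> ((nat \<Rightarrow> nat) \<times> nat list) pmf" where
  "Dw_pmf p n = bind_pmf (D_pmf p n) (\<lambda>d. map_pmf (\<lambda>w. (d, w)) (pmf_of_set (words n d)))"

text \<open>The list [I_1, ..., I_k] of positions of first appearances, stored 0-based
  (list position j corresponds to the paper's index j+1). The first element is position 0,
  i.e. I_1 = 1 in the paper's 1-based convention.\<close>
fun Iseq :: "nat list \<Rightarrow> nat \<Rightarrow> nat list" where
  "Iseq w 0 = []"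
| "Iseq w (Suc k) = Iseq w k @ [LEAST i. i < length w \<and> w ! i \<notin> (\<lambda>j. w ! j) ` set (Iseq w k)]"

definition Sigma :: "nat list \<Rightarrow> nat \<Rightarrow> nat" where
  "Sigma w k = w ! (Iseq w k ! (k - 1))"

definition Dhat :: "(nat \<Rightarrow> nat) \<Rightarrow> nat list \<Rightarrow> nat \<Rightarrow> nat" where
  "Dhat d w i = (if 1 \<le> i \<and> i \<le> card (set w) then d (Sigma w i) else 0)"

definition Nn :: "nat \<Rightarrow> (nat \<Rightarrow> nat) \<Rightarrow> nat" where
  "Nn n d = card {i\<in>{1..n}. d i > 0}"

text \<open>Theta^n_m(k_1,...,k_m).  The probability P(Xi_{n-m} = n-1-sum k) is 0 when the
  target is negative.\<close>
definition Theta :: "nat pmf \<Rightarrow> nat \<Rightarrow> nat \<Rightarrow> (nat \<Rightarrow> nat) \<Rightarrow> real" where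
  "Theta p n m k =
     (if (\<Sum>i\<in>{1..m}. k i) \<le> n - 1
      then pmf (Xi_pmf p (n - m)) (n - 1 - (\<Sum>i\<in>{1..m}. k i)) else 0)
     / pmf (Xi_pmf p n) (n - 1)
     * (\<Prod>i\<in>{1..m}. (real n - real i + 1) / (real n - 1 - (\<Sum>j\<in>{1..<i}. real (k j))))"

text \<open>R^m embedded as functions nat => real vanishing outside {1..m}
  (product topology = Euclidean topology on this subspace).\<close>
definition Rm :: "nat \<Rightarrow> (nat \<Rightarrow> real) set" where
  "Rm m = {x. \<forall>i. i \<notin> {1..m} \<longrightarrow> x i = 0}"

end

theory Submission
  imports Defs "HOL-Combinatorics.Multiset_Permutations"
begin

(* Given D = d, the word w is a uniformly random arrangement of the multiset with d i copies
   of each vertex i, and Sigma(1), ..., Sigma(m) are its first m distinct letters. Reading w from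
   the left, every new letter is drawn with probability proportional to its multiplicity among
   the letters not seen yet, so the first m new letters form a given injective sequence s with
   probability prod_i d(s_i) / (n - 1 - sum_{j<i} d(s_j)); this follows by induction on the
   first letter of w. Summing over the n (n-1) ... (n-m+1) injective sequences s and over d, the
   i.i.d. weight of d splits into prod_i P(xi = k_i) for the degrees k along s and
   P(Xi_{n-m} = n - 1 - sum_i k_i) for the remaining vertices. Dividing by P(Xi_n = n - 1) and
   writing k P(xi = k) = P(xi* = k) gives Theta. All sums are finite. *)

section \<open>First occurrences in a word\<close>

lemma hd_filter_conv_nth_Least:
  assumes "\<exists>x\<in>set w. P x"
  shows "hd (filter P w) = w ! (LEAST i. i < length w \<and> P (w ! i))"
  using assms
proof (induction w)
  case (Cons a w)
  show ?case
  proof (cases "P a")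
    case True
    then have "(LEAST i. i < length (a # w) \<and> P ((a # w) ! i)) = 0"
      by (intro Least_equality) auto
    with True show ?thesis by simp
  next
    case False
    with Cons.prems obtain j where "j < length w" "P (w ! j)"
      by (auto simp: in_set_conv_nth)
    with False have "(LEAST i. i < length (a # w) \<and> P ((a # w) ! i))
        = Suc (LEAST i. i < length w \<and> P (w ! i))"
      using Least_Suc[of "\<lambda>i. i < length (a # w) \<and> P ((a # w) ! i)" "Suc j"] by simp
    with False Cons show ?thesis by simp
  qed
qed simp

fun first_occurrences :: "'a set \<Rightarrow> 'a list \<Rightarrow> 'a list" where
  "first_occurrences S [] = []"
| "first_occurrences S (x # xs) =
     (if x \<in> S then first_occurrences S xs else x # first_occurrences (insert x S) xs)"

lemma set_first_occurrences [simp]: "set (first_occurrences S w) = set w - S"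
  by (induction S w rule: first_occurrences.induct) auto

lemma distinct_first_occurrences [simp]: "distinct (first_occurrences S w)"
  by (induction S w rule: first_occurrences.induct) auto

lemma length_first_occurrences: "length (first_occurrences {} w) = card (set w)"
  using distinct_card[OF distinct_first_occurrences, of "{}" w] by simp

lemma nth_first_occurrences:
  "k < length (first_occurrences S w) \<Longrightarrow>
   first_occurrences S w ! k = hd (filter (\<lambda>x. x \<notin> S \<union> set (take k (first_occurrences S w))) w)"
proof (induction S w arbitrary: k rule: first_occurrences.induct)
  case (2 S x xs)
  show ?case
  proof (cases "x \<in> S")
    case False
    then show ?thesis
      using "2.IH"(2)[OF False, of "k - 1"] "2.prems" by (cases k) (auto intro: filter_cong)
  qed (use 2 in simp)
qed simp

lemma length_Iseq [simp]: "length (Iseq w k) = k"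
  by (induction k) auto

lemma map_nth_Iseq:
  "k \<le> card (set w) \<Longrightarrow> map ((!) w) (Iseq w k) = take k (first_occurrences {} w)"
proof (induction k)
  case (Suc k)
  let ?F = "first_occurrences {} w"
  have k: "k < length ?F"
    using Suc.prems length_first_occurrences[of w] by linarith
  have IH: "(!) w ` set (Iseq w k) = set (take k ?F)"
    using Suc by (metis Suc_leD list.set_map)
  have new: "?F ! k \<in> set w" "?F ! k \<notin> set (take k ?F)"
    using k nth_mem[OF k] distinct_first_occurrences[of "{}" w]
    by (auto simp: in_set_conv_nth nth_eq_iff_index_eq)
  have "?F ! k = hd (filter (\<lambda>x. x \<notin> set (take k ?F)) w)"
    using nth_first_occurrences[OF k] by simp
  also have "\<dots> = w ! (LEAST i. i < length w \<and> w ! i \<notin> (!) w ` set (Iseq w k))"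
    unfolding IH by (rule hd_filter_conv_nth_Least) (use new in blast)
  finally have "w ! (LEAST i. i < length w \<and> w ! i \<notin> (!) w ` set (Iseq w k)) = ?F ! k" ..
  then show ?case
    using Suc k by (simp add: take_Suc_conv_app_nth)
qed simp

lemma Sigma_eq_nth_first_occurrences:
  assumes "1 \<le> i" "i \<le> card (set w)"
  shows "Sigma w i = first_occurrences {} w ! (i - 1)"
proof -
  have "Sigma w i = map ((!) w) (Iseq w i) ! (i - 1)"
    unfolding Sigma_def using assms by simp
  also have "\<dots> = first_occurrences {} w ! (i - 1)"
    using map_nth_Iseq[OF assms(2)] assms(1) by simp
  finally show ?thesis .
qed

section \<open>Arrangements of a multiset\<close>

fun first_occurrences_prob :: "'a multiset \<Rightarrow> 'a set \<Rightarrow> 'a list \<Rightarrow> real" where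
  "first_occurrences_prob A S [] = 1"
| "first_occurrences_prob A S (a # s) =
     count A a / size (filter_mset (\<lambda>x. x \<notin> S) A) * first_occurrences_prob A (insert a S) s"

lemma first_occurrences_prob_cong:
  assumes "\<And>x. x \<notin> S \<Longrightarrow> count A x = count B x" "set s \<inter> S = {}" "distinct s"
  shows "first_occurrences_prob A S s = first_occurrences_prob B S s"
  using assms
proof (induction s arbitrary: S)
  case (Cons a s)
  have "filter_mset (\<lambda>x. x \<notin> S) A = filter_mset (\<lambda>x. x \<notin> S) B"
    using Cons.prems(1) by (intro multiset_eqI) auto
  moreover have "first_occurrences_prob A (insert a S) s = first_occurrences_prob B (insert a S) s"
    using Cons.prems by (intro Cons.IH) auto
  ultimately show ?case
    using Cons.prems by simp
qed simp

lemma card_filter_permutations_of_multiset: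
  assumes "A \<noteq> {#}"
  shows "card {w \<in> permutations_of_multiset A. P w}
       = (\<Sum>x\<in>set_mset A. card {w \<in> permutations_of_multiset (A - {#x#}). P (x # w)})"
proof -
  have "{w \<in> permutations_of_multiset A. P w}
      = (\<Union>x\<in>set_mset A. (#) x ` {w \<in> permutations_of_multiset (A - {#x#}). P (x # w)})"
    unfolding permutations_of_multiset_nonempty[OF assms] by auto
  also have "card \<dots> = (\<Sum>x\<in>set_mset A. card ((#) x ` {w \<in> permutations_of_multiset (A - {#x#}). P (x # w)}))"
    by (rule card_UN_disjoint) auto
  finally show ?thesis
    by (simp add: card_image)
qed

lemma size_filter_mset_notin_insert:
  "a \<notin> S \<Longrightarrow> size (filter_mset (\<lambda>x. x \<notin> S) A) = size (filter_mset (\<lambda>x. x \<notin> insert a S) A) + count A a"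
proof -
  assume "a \<notin> S"
  then have "filter_mset (\<lambda>x. x \<notin> S) A = filter_mset (\<lambda>x. x \<notin> insert a S) A + replicate_mset (count A a) a"
    by (intro multiset_eqI) auto
  then show ?thesis by simp
qed

lemma first_occurrences_prob_first_step:
  assumes aS: "a \<notin> S"
  shows "(\<Sum>x\<in>set_mset A. count A x * (if x \<in> S then first_occurrences_prob A S (a # s)
            else if x = a then first_occurrences_prob A (insert a S) s else 0))
       = size A * first_occurrences_prob A S (a # s)"
proof -
  let ?\<rho> = "first_occurrences_prob A S (a # s)" and ?\<rho>' = "first_occurrences_prob A (insert a S) s"
  define L where "L = real (size (filter_mset (\<lambda>x. x \<notin> S) A))"
  have "count A a * ?\<rho>' = L * ?\<rho>"
  proof (cases "L = 0")
    case True
    then have "count A a = 0"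
      using aS by (auto simp: L_def count_eq_zero_iff)
    with True show ?thesis by simp
  qed (simp add: L_def)
  moreover have "real (size A) = real (\<Sum>x\<in>set_mset A. if x \<in> S then count A x else 0) + L"
  proof -
    have "size A = size (filter_mset (\<lambda>x. x \<in> S) A) + size (filter_mset (\<lambda>x. x \<notin> S) A)"
      by (metis multiset_partition size_union)
    then show ?thesis
      by (simp add: L_def size_multiset_overloaded_eq sum.inter_filter)
  qed
  moreover have "(\<Sum>x\<in>set_mset A. count A x * (if x \<in> S then ?\<rho> else if x = a then ?\<rho>' else 0))
      = real (\<Sum>x\<in>set_mset A. if x \<in> S then count A x else 0) * ?\<rho> + count A a * ?\<rho>'"
  proof -
    have "(\<Sum>x\<in>set_mset A. count A x * (if x \<in> S then ?\<rho> else if x = a then ?\<rho>' else 0))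
        = (\<Sum>x\<in>set_mset A. real (if x \<in> S then count A x else 0) * ?\<rho>)
          + (\<Sum>x\<in>set_mset A. if x = a then count A x * ?\<rho>' else 0)"
      unfolding sum.distrib[symmetric] using aS by (intro sum.cong) auto
    then show ?thesis
      by (simp add: not_in_iff del: first_occurrences_prob.simps flip: sum_distrib_right of_nat_sum)
  qed
  ultimately show ?thesis
    by (simp add: algebra_simps del: first_occurrences_prob.simps)
qed

lemma card_first_occurrences_prefix:
  assumes "distinct s" "set s \<inter> S = {}"
  shows "card {w \<in> permutations_of_multiset A. take (length s) (first_occurrences S w) = s}
       = card (permutations_of_multiset A) * first_occurrences_prob A S s"
  using assms
proof (induction "size A" arbitrary: A S s rule: less_induct)
  case less
  show ?case
  proof (cases "s = [] \<or> A = {#}")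
    case True
    then show ?thesis by (cases s) auto
  next
    case False
    then obtain a s' where s: "s = a # s'" and A: "A \<noteq> {#}"
      by (auto simp: neq_Nil_conv)
    have aS: "a \<notin> S" using less.prems s by auto
    let ?P = "\<lambda>S s w. take (length s) (first_occurrences S w) = s"
    let ?T = "\<lambda>B. real (card (permutations_of_multiset B))"
    define \<phi> where "\<phi> x = (if x \<in> S then first_occurrences_prob A S s
      else if x = a then first_occurrences_prob A (insert a S) s' else 0)" for x
    have summand: "real (card {w \<in> permutations_of_multiset (A - {#x#}). ?P S s (x # w)})
        = ?T A / size A * (count A x * \<phi> x)" if x: "x \<in># A" for x
    proof -
      have IH: "real (card {w \<in> permutations_of_multiset (A - {#x#}). ?P S' s'' w})
          = ?T (A - {#x#}) * first_occurrences_prob (A - {#x#}) S' s''"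
        if "distinct s''" "set s'' \<inter> S' = {}" for S' s''
        using less.hyps[OF size_Diff1_less[OF x] that] by simp
      have T: "?T (A - {#x#}) = ?T A * count A x / size A"
        using x by (simp add: real_card_permutations_of_multiset_remove)
      \<comment> \<open>a first letter in S is not new; otherwise it must be the first new letter a\<close>
      consider "x \<in> S" | "x \<notin> S" "x = a" | "x \<notin> S" "x \<noteq> a" by blast
      then show ?thesis
      proof cases
        case 1
        then have "first_occurrences_prob (A - {#x#}) S s = first_occurrences_prob A S s"
          using less.prems by (intro first_occurrences_prob_cong) auto
        with 1 show ?thesis
          using IH[OF less.prems] T by (simp add: \<phi>_def)
      next
        case 2
        then have "first_occurrences_prob (A - {#x#}) (insert a S) s' = first_occurrences_prob A (insert a S) s'"
          using less.prems s by (intro first_occurrences_prob_cong) auto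
        with 2 show ?thesis
          using IH[of s' "insert a S"] less.prems T by (simp add: s \<phi>_def)
      next
        case 3
        then show ?thesis by (simp add: s \<phi>_def)
      qed
    qed
    have "real (card {w \<in> permutations_of_multiset A. ?P S s w})
        = ?T A / size A * (\<Sum>x\<in>set_mset A. count A x * \<phi> x)"
      using card_filter_permutations_of_multiset[OF A, of "?P S s"] summand
      by (simp add: sum_distrib_left)
    also have "\<dots> = ?T A * first_occurrences_prob A S s"
      using first_occurrences_prob_first_step[OF aS, of A s'] A
      unfolding \<phi>_def s by (simp del: first_occurrences_prob.simps)
    finally show ?thesis .
  qed
qed

lemma first_occurrences_prob_eq_prod:
  assumes "distinct s" "set s \<inter> S = {}"
  shows "first_occurrences_prob A S s =
     (\<Prod>i<length s. count A (s ! i) /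
        (size (filter_mset (\<lambda>x. x \<notin> S) A) - (\<Sum>j<i. real (count A (s ! j)))))"
  using assms
proof (induction s arbitrary: S)
  case (Cons a s)
  define L where "L = real (size (filter_mset (\<lambda>x. x \<notin> S) A))"
  have "a \<notin> S" using Cons.prems by auto
  then have "real (size (filter_mset (\<lambda>x. x \<notin> insert a S) A)) = L - count A a"
    using size_filter_mset_notin_insert[of a S A] by (simp add: L_def)
  then have IH: "first_occurrences_prob A (insert a S) s = (\<Prod>i<length s. count A (s ! i) /
        (L - count A a - (\<Sum>j<i. real (count A (s ! j)))))"
    using Cons by simp
  have "(\<Prod>i<length (a # s). count A ((a # s) ! i) / (L - (\<Sum>j<i. real (count A ((a # s) ! j)))))
      = count A a / L * (\<Prod>i<length s. count A (s ! i) / (L - (\<Sum>j<Suc i. real (count A ((a # s) ! j)))))"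
    unfolding length_Cons prod.lessThan_Suc_shift by (simp del: prod.lessThan_Suc sum.lessThan_Suc)
  also have "\<dots> = count A a / L * first_occurrences_prob A (insert a S) s"
    unfolding IH by (simp add: sum.lessThan_Suc_shift algebra_simps del: sum.lessThan_Suc)
  finally show ?case by (simp add: L_def)
qed simp

definition degree_mset :: "nat \<Rightarrow> (nat \<Rightarrow> nat) \<Rightarrow> nat multiset" where
  "degree_mset n d = (\<Sum>i\<in>{1..n}. replicate_mset (d i) i)"

lemma count_degree_mset: "count (degree_mset n d) x = (if x \<in> {1..n} then d x else 0)"
  unfolding degree_mset_def count_sum by simp

lemma size_degree_mset: "size (degree_mset n d) = (\<Sum>i\<in>{1..n}. d i)"
  unfolding degree_mset_def by simp

lemma words_eq_permutations_of_multiset: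
  assumes "(\<Sum>i\<in>{1..n}. d i) = n - 1"
  shows "words n d = permutations_of_multiset (degree_mset n d)"
proof (intro equalityI subsetI)
  fix w assume w: "w \<in> words n d"
  have "count (mset w) x = count (degree_mset n d) x" for x
    using w by (cases "x \<in> {1..n}") (auto simp: words_def count_degree_mset count_mset count_list_0_iff)
  then show "w \<in> permutations_of_multiset (degree_mset n d)"
    by (intro permutations_of_multisetI multiset_eqI)
next
  fix w assume "w \<in> permutations_of_multiset (degree_mset n d)"
  then have w: "mset w = degree_mset n d" by (rule permutations_of_multisetD)
  then have "length w = n - 1"
    using assms by (metis size_mset size_degree_mset)
  moreover have "set w \<subseteq> {1..n}"
    using w by (metis count_degree_mset set_mset_mset subsetI zero_less_iff_neq_zero count_greater_zero_iff)
  moreover have "\<forall>i\<in>{1..n}. count_list w i = d i"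
    using w by (metis count_degree_mset count_mset)
  ultimately show "w \<in> words n d" unfolding words_def by blast
qed

lemma card_set_words:
  assumes "w \<in> words n d"
  shows "card (set w) = Nn n d"
proof -
  have "x \<in> set w \<longleftrightarrow> x \<in> {1..n} \<and> d x > 0" for x
  proof (cases "x \<in> {1..n}")
    case True
    then have "count_list w x = d x" using assms by (simp add: words_def)
    with True show ?thesis using count_list_0_iff[of w x] by auto
  qed (use assms in \<open>auto simp: words_def\<close>)
  then have "set w = {i\<in>{1..n}. d i > 0}" by blast
  then show ?thesis unfolding Nn_def by simp
qed

definition degrees_along :: "nat list \<Rightarrow> (nat \<Rightarrow> nat) \<Rightarrow> nat \<Rightarrow> nat" where
  "degrees_along s d i = (if i \<in> {1..length s} then d (s ! (i - 1)) else 0)"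

definition size_biased_pick_prob :: "nat \<Rightarrow> nat \<Rightarrow> (nat \<Rightarrow> nat) \<Rightarrow> real" where
  "size_biased_pick_prob n m k = (\<Prod>i\<in>{1..m}. k i / (real n - 1 - (\<Sum>j\<in>{1..<i}. real (k j))))"

lemma first_occurrences_prob_degree_mset:
  assumes d: "(\<Sum>i\<in>{1..n}. d i) = n - 1" and s: "distinct s" "set s \<subseteq> {1..n}"
  shows "first_occurrences_prob (degree_mset n d) {} s
       = size_biased_pick_prob n (length s) (degrees_along s d)"
proof (cases "s = []")
  case False
  then have "n \<ge> 1" using s(2) by (cases s) auto
  then have size: "real (size (degree_mset n d)) = real n - 1"
    using d by (simp add: size_degree_mset)
  have count: "count (degree_mset n d) (s ! i) = d (s ! i)" if "i < length s" for i
  proof -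
    have "s ! i \<in> {1..n}" using that s(2) nth_mem by blast
    then show ?thesis by (simp add: count_degree_mset)
  qed
  have "first_occurrences_prob (degree_mset n d) {} s
      = (\<Prod>i<length s. d (s ! i) / (real n - 1 - (\<Sum>j<i. real (d (s ! j)))))"
    unfolding first_occurrences_prob_eq_prod[OF s(1), of "{}", simplified]
    by (intro prod.cong refl) (simp add: count size)
  also have "\<dots> = size_biased_pick_prob n (length s) (degrees_along s d)"
    unfolding size_biased_pick_prob_def prod.atLeast1_atMost_eq[unfolded One_nat_def[symmetric]]
  proof (intro prod.cong refl)
    fix i assume i: "i \<in> {..<length s}"
    have "(\<Sum>j\<in>{1..<Suc i}. real (degrees_along s d j)) = (\<Sum>j<i. real (degrees_along s d (Suc j)))"
      by (simp add: sum.atLeast_Suc_lessThan_Suc_shift atLeast0LessThan del: sum.op_ivl_Suc)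
    also have "\<dots> = (\<Sum>j<i. real (d (s ! j)))"
      using i by (intro sum.cong) (auto simp: degrees_along_def)
    finally have sum: "(\<Sum>j\<in>{1..<Suc i}. real (degrees_along s d j)) = (\<Sum>j<i. real (d (s ! j)))" .
    have "degrees_along s d (Suc i) = d (s ! i)"
      using i by (simp add: degrees_along_def)
    then show "d (s ! i) / (real n - 1 - (\<Sum>j<i. real (d (s ! j))))
        = degrees_along s d (Suc i) / (real n - 1 - (\<Sum>j\<in>{1..<Suc i}. real (degrees_along s d j)))"
      by (simp only: sum)
  qed
  finally show ?thesis .
qed (simp add: size_biased_pick_prob_def)

definition distinct_lists :: "'a set \<Rightarrow> nat \<Rightarrow> 'a list set" where
  "distinct_lists A m = {s. length s = m \<and> distinct s \<and> set s \<subseteq> A}"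

lemma finite_distinct_lists: "finite A \<Longrightarrow> finite (distinct_lists A m)"
  unfolding distinct_lists_def
  by (rule finite_subset[OF _ finite_lists_length_eq[of A m]]) auto

lemma real_card_distinct_lists_atLeastAtMost:
  assumes "m \<le> n"
  shows "real (card (distinct_lists {1..n} m)) = (\<Prod>i\<in>{1..m}. real n - real i + 1)"
  using assms
proof (induction m)
  case 0
  have "distinct_lists {1..n} 0 = {[]}" by (auto simp: distinct_lists_def)
  then show ?case by simp
next
  case (Suc m)
  have "card (distinct_lists {1..n} (Suc m)) = (n - m) * card (distinct_lists {1..n} m)"
    using Suc.prems
    by (simp add: distinct_lists_def card_lists_distinct_length_eq conj_commute Suc_diff_Suc
        atLeastAtMost_insertL[symmetric])
  with Suc show ?case by simp
qed

lemma Dhat_eq_degrees_along: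
  assumes "i \<in> {1..m}" "m \<le> card (set w)"
  shows "Dhat d w i = degrees_along (take m (first_occurrences {} w)) d i"
proof -
  have "i - 1 < m" using assms(1) by auto
  then show ?thesis
    using assms Sigma_eq_nth_first_occurrences[of i w]
    by (simp add: Dhat_def degrees_along_def length_first_occurrences)
qed

lemma sum_words_first_degrees:
  fixes F :: "(nat \<Rightarrow> real) \<Rightarrow> real"
  assumes d: "(\<Sum>i\<in>{1..n}. d i) = n - 1"
  shows "(\<Sum>w\<in>words n d. F (\<lambda>i. if i \<in> {1..m} then real (Dhat d w i) else 0)
                        * (if Nn n d \<ge> m then 1 else 0))
       = card (words n d) * (\<Sum>s\<in>distinct_lists {1..n} m.
           F (\<lambda>i. real (degrees_along s d i)) * size_biased_pick_prob n m (degrees_along s d))"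
proof -
  let ?W = "words n d" and ?I = "distinct_lists {1..n} m"
  let ?t = "\<lambda>w. take m (first_occurrences {} w)"
  let ?H = "\<lambda>s. F (\<lambda>i. real (degrees_along s d i))"
  have W: "?W = permutations_of_multiset (degree_mset n d)"
    by (rule words_eq_permutations_of_multiset[OF d])
  have summand: "F (\<lambda>i. if i \<in> {1..m} then real (Dhat d w i) else 0) * (if Nn n d \<ge> m then 1 else 0)
      = (\<Sum>s\<in>?I. if ?t w = s then ?H s else 0)" if w: "w \<in> ?W" for w
  proof (cases "m \<le> card (set w)")
    case True
    have "set (?t w) \<subseteq> {1..n}"
      using w set_take_subset[of m "first_occurrences {} w"] by (auto simp: words_def)
    then have "?t w \<in> ?I"
      using True by (simp add: distinct_lists_def length_first_occurrences)
    moreover have "(\<lambda>i. if i \<in> {1..m} then real (Dhat d w i) else 0) = (\<lambda>i. real (degrees_along (?t w) d i))"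
      using True Dhat_eq_degrees_along[OF _ True]
      by (auto simp: degrees_along_def length_first_occurrences)
    ultimately show ?thesis
      using True card_set_words[OF w] finite_distinct_lists[of "{1..n}" m] by simp
  next
    case False
    then have "?t w \<notin> ?I"
      by (auto simp: distinct_lists_def length_first_occurrences)
    then show ?thesis
      using False card_set_words[OF w] finite_distinct_lists[of "{1..n}" m] by simp
  qed
  have "(\<Sum>w\<in>?W. \<Sum>s\<in>?I. if ?t w = s then ?H s else 0) = (\<Sum>s\<in>?I. \<Sum>w\<in>?W. if ?t w = s then ?H s else 0)"
    by (rule sum.swap)
  also have "\<dots> = (\<Sum>s\<in>?I. ?H s * card {w \<in> ?W. ?t w = s})"
    by (simp add: W mult.commute flip: sum.inter_filter)
  also have "\<dots> = (\<Sum>s\<in>?I. ?H s * (card ?W * size_biased_pick_prob n m (degrees_along s d)))"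
  proof (intro sum.cong refl)
    fix s assume s: "s \<in> ?I"
    then have "card {w \<in> ?W. ?t w = s} = card ?W * first_occurrences_prob (degree_mset n d) {} s"
      using card_first_occurrences_prefix[of s "{}"] by (simp add: W distinct_lists_def)
    then show "?H s * card {w \<in> ?W. ?t w = s} = ?H s * (card ?W * size_biased_pick_prob n m (degrees_along s d))"
      using s first_occurrences_prob_degree_mset[OF d] by (simp add: distinct_lists_def)
  qed
  finally show ?thesis
    using summand by (simp add: sum_distrib_left mult_ac)
qed

section \<open>Sums of i.i.d. variables\<close>

definition weak_compositions :: "'a set \<Rightarrow> nat \<Rightarrow> ('a \<Rightarrow> nat) set" where
  "weak_compositions R s = {e. (\<forall>i. i \<notin> R \<longrightarrow> e i = 0) \<and> (\<Sum>i\<in>R. e i) = s}"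

lemma finite_weak_compositions:
  assumes "finite R"
  shows "finite (weak_compositions R s)"
proof (rule finite_subset)
  show "weak_compositions R s \<subseteq> PiE_dflt R 0 (\<lambda>_. {..s})"
    using assms by (auto simp: weak_compositions_def PiE_dflt_def intro: member_le_sum[of _ R, simplified])
  show "finite (PiE_dflt R 0 (\<lambda>_. {..s}))"
    using assms by (intro finite_PiE_dflt) auto
qed

lemma measure_Pi_pmf_sum_eq:
  assumes "finite R"
  shows "measure (Pi_pmf R 0 (\<lambda>_. p)) {x. (\<Sum>i\<in>R. x i) = s}
       = (\<Sum>e\<in>weak_compositions R s. \<Prod>i\<in>R. pmf p (e i))"
proof -
  let ?M = "Pi_pmf R 0 (\<lambda>_. p)"
  have "{x. (\<Sum>i\<in>R. x i) = s} \<inter> set_pmf ?M = weak_compositions R s \<inter> set_pmf ?M"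
    using set_Pi_pmf_subset[OF assms, of 0 "\<lambda>_. p"] by (auto simp: weak_compositions_def)
  then have "measure ?M {x. (\<Sum>i\<in>R. x i) = s} = measure ?M (weak_compositions R s)"
    by (metis measure_Int_set_pmf)
  also have "\<dots> = (\<Sum>e\<in>weak_compositions R s. pmf ?M e)"
    by (rule measure_measure_pmf_finite[OF finite_weak_compositions[OF assms]])
  also have "\<dots> = (\<Sum>e\<in>weak_compositions R s. \<Prod>i\<in>R. pmf p (e i))"
    using assms by (intro sum.cong refl pmf_Pi') (auto simp: weak_compositions_def)
  finally show ?thesis .
qed

lemma pmf_Xi_pmf_eq_measure_Pi_pmf:
  fixes R :: "nat set"
  assumes R: "finite R" "card R = r"
  shows "pmf (Xi_pmf p r) s = measure (Pi_pmf R 0 (\<lambda>_. p)) {x. (\<Sum>i\<in>R. x i) = s}"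
proof -
  obtain h where h: "bij_betw h {1..r} R"
    using R by (metis card_atLeastAtMost diff_Suc_1 finite_atLeastAtMost finite_same_card_bij)
  \<comment> \<open>extend h outside {1..r} so that it misses R there, as required for reindexing Pi_pmf\<close>
  define h' where "h' x = (if x \<in> {1..r} then h x else Max R + 1 + x)" for x
  have h': "bij_betw h' {1..r} R"
    using h unfolding h'_def by (rule bij_betw_cong[THEN iffD1, rotated]) auto
  have out: "h' x \<notin> R" if "x \<notin> {1..r}" for x
    using that Max_ge[OF R(1)] by (fastforce simp: h'_def)
  have "Pi_pmf {1..r} 0 (\<lambda>_. p) = map_pmf (\<lambda>g. g \<circ> h') (Pi_pmf R 0 (\<lambda>_. p))"
    by (rule Pi_pmf_bij_betw[OF _ h' out]) auto
  moreover have "(\<Sum>i\<in>{1..r}. g (h' i)) = (\<Sum>i\<in>R. g i)" for g :: "nat \<Rightarrow> nat"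
    by (rule sum.reindex_bij_betw[OF h'])
  ultimately show ?thesis
    by (simp add: Xi_pmf_def pmf_map vimage_def)
qed

lemma pmf_Xi_pmf_eq_sum:
  fixes R :: "nat set"
  assumes "finite R" "card R = r"
  shows "pmf (Xi_pmf p r) s = (\<Sum>e\<in>weak_compositions R s. \<Prod>i\<in>R. pmf p (e i))"
  using assms by (simp add: pmf_Xi_pmf_eq_measure_Pi_pmf measure_Pi_pmf_sum_eq)

definition prob_Xi_plus_eq :: "nat pmf \<Rightarrow> nat \<Rightarrow> nat \<Rightarrow> nat \<Rightarrow> real" where
  "prob_Xi_plus_eq p r K L = (if K \<le> L then pmf (Xi_pmf p r) (L - K) else 0)"

lemma inj_on_override_on_weak_compositions:
  "inj_on (\<lambda>e. override_on e a J) (weak_compositions (N - J) s)"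
proof (intro inj_onI ext)
  fix e1 e2 j
  assume "e1 \<in> weak_compositions (N - J) s" "e2 \<in> weak_compositions (N - J) s"
    and "override_on e1 a J = override_on e2 a J"
  then show "e1 j = e2 j"
    by (cases "j \<in> J") (auto simp: weak_compositions_def override_on_def dest: fun_cong[of _ _ j])
qed

lemma weak_compositions_fixed_on_eq_image:
  fixes N J :: "'a set"
  assumes N: "finite N" and J: "J \<subseteq> N" and K: "(\<Sum>j\<in>J. a j) \<le> L"
  shows "{d \<in> weak_compositions N L. \<forall>j\<in>J. d j = a j}
       = (\<lambda>e. override_on e a J) ` weak_compositions (N - J) (L - (\<Sum>j\<in>J. a j))"
proof (intro equalityI subsetI)
  have sum_N: "(\<Sum>j\<in>N. d j) = (\<Sum>j\<in>N - J. d j) + (\<Sum>j\<in>J. d j)" for d :: "'a \<Rightarrow> nat"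
    by (rule sum.subset_diff[OF J N])
  fix d assume d: "d \<in> {d \<in> weak_compositions N L. \<forall>j\<in>J. d j = a j}"
  then have "(\<lambda>j. if j \<in> N - J then d j else 0) \<in> weak_compositions (N - J) (L - (\<Sum>j\<in>J. a j))"
    using sum_N[of d] by (auto simp: weak_compositions_def)
  moreover have "d = override_on (\<lambda>j. if j \<in> N - J then d j else 0) a J"
    using d by (auto simp: override_on_def weak_compositions_def)
  ultimately show "d \<in> (\<lambda>e. override_on e a J) ` weak_compositions (N - J) (L - (\<Sum>j\<in>J. a j))"
    by blast
next
  fix d assume "d \<in> (\<lambda>e. override_on e a J) ` weak_compositions (N - J) (L - (\<Sum>j\<in>J. a j))"
  then obtain e where e: "e \<in> weak_compositions (N - J) (L - (\<Sum>j\<in>J. a j))" "d = override_on e a J"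
    by blast
  have "(\<Sum>j\<in>N - J. d j) = L - (\<Sum>j\<in>J. a j)" "(\<Sum>j\<in>J. d j) = (\<Sum>j\<in>J. a j)"
    using e by (simp_all add: override_on_def weak_compositions_def)
  then show "d \<in> {d \<in> weak_compositions N L. \<forall>j\<in>J. d j = a j}"
    using e K J sum.subset_diff[OF J N, of d] by (auto simp: weak_compositions_def override_on_def)
qed

lemma sum_weak_compositions_fixed_on:
  fixes N J :: "nat set"
  assumes N: "finite N" and J: "J \<subseteq> N"
  shows "(\<Sum>d\<in>{d \<in> weak_compositions N L. \<forall>j\<in>J. d j = a j}. \<Prod>j\<in>N. pmf p (d j))
       = (\<Prod>j\<in>J. pmf p (a j)) * prob_Xi_plus_eq p (card N - card J) (\<Sum>j\<in>J. a j) L"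
proof (cases "(\<Sum>j\<in>J. a j) \<le> L")
  case True
  have R: "finite (N - J)" "card (N - J) = card N - card J"
    using N J finite_subset[OF J N] by (simp_all add: card_Diff_subset)
  have "(\<Prod>j\<in>N. pmf p (override_on e a J j)) = (\<Prod>j\<in>J. pmf p (a j)) * (\<Prod>j\<in>N - J. pmf p (e j))" for e
    unfolding prod.subset_diff[OF J N] by (simp add: override_on_def mult.commute)
  then have "(\<Sum>d\<in>{d \<in> weak_compositions N L. \<forall>j\<in>J. d j = a j}. \<Prod>j\<in>N. pmf p (d j))
      = (\<Prod>j\<in>J. pmf p (a j)) * (\<Sum>e\<in>weak_compositions (N - J) (L - (\<Sum>j\<in>J. a j)). \<Prod>j\<in>N - J. pmf p (e j))"
    unfolding weak_compositions_fixed_on_eq_image[OF N J True]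
    by (simp add: sum.reindex[OF inj_on_override_on_weak_compositions] sum_distrib_left)
  with True show ?thesis
    by (simp add: prob_Xi_plus_eq_def pmf_Xi_pmf_eq_sum[OF R])
next
  case False
  have "(\<Sum>j\<in>J. a j) \<le> (\<Sum>j\<in>N. d j)" if "\<forall>j\<in>J. d j = a j" for d
    using that sum.subset_diff[OF J N, of d] by simp
  with False have empty: "{d \<in> weak_compositions N L. \<forall>j\<in>J. d j = a j} = {}"
    by (auto simp: weak_compositions_def)
  show ?thesis
    unfolding empty using False by (simp add: prob_Xi_plus_eq_def)
qed

lemma bij_betw_nth_pred: "distinct s \<Longrightarrow> bij_betw (\<lambda>i. s ! (i - 1)) {1..length s} (set s)"
proof (rule bij_betwI')
  fix y assume "y \<in> set s"
  then obtain j where "j < length s" "y = s ! j" by (metis in_set_conv_nth)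
  then show "\<exists>x\<in>{1..length s}. y = s ! (x - 1)" by (intro bexI[of _ "Suc j"]) auto
qed (auto simp: nth_eq_iff_index_eq)

lemma sum_weak_compositions_degrees_along_eq:
  fixes N :: "nat set"
  assumes N: "finite N" and s: "distinct s" "set s \<subseteq> N"
    and k: "\<And>i. i \<notin> {1..length s} \<Longrightarrow> k i = 0"
  shows "(\<Sum>d\<in>{d \<in> weak_compositions N L. degrees_along s d = k}. \<Prod>j\<in>N. pmf p (d j))
       = (\<Prod>i\<in>{1..length s}. pmf p (k i))
         * prob_Xi_plus_eq p (card N - length s) (\<Sum>i\<in>{1..length s}. k i) L"
proof -
  let ?I = "{1..length s}"
  define g where "g i = s ! (i - 1)" for i
  have g: "bij_betw g ?I (set s)"
    unfolding g_def by (rule bij_betw_nth_pred[OF s(1)])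
  define a where "a = k \<circ> the_inv_into ?I g"
  have a: "a (g i) = k i" if "i \<in> ?I" for i
    using g that by (simp add: a_def the_inv_into_f_f bij_betw_def)
  have "degrees_along s d = k \<longleftrightarrow> (\<forall>j\<in>set s. d j = a j)" for d
  proof -
    have "degrees_along s d = k \<longleftrightarrow> (\<forall>i\<in>?I. d (g i) = k i)"
      using k by (auto simp: degrees_along_def g_def fun_eq_iff)
    also have "\<dots> \<longleftrightarrow> (\<forall>j\<in>set s. d j = a j)"
      unfolding bij_betw_imp_surj_on[OF g, symmetric] using a by auto
    finally show ?thesis .
  qed
  then have "{d \<in> weak_compositions N L. degrees_along s d = k}
      = {d \<in> weak_compositions N L. \<forall>j\<in>set s. d j = a j}" by simp
  moreover have "(\<Prod>j\<in>set s. pmf p (a j)) = (\<Prod>i\<in>?I. pmf p (k i))"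
    using a by (simp add: prod.reindex_bij_betw[OF g, symmetric])
  moreover have "(\<Sum>j\<in>set s. a j) = (\<Sum>i\<in>?I. k i)"
    using a by (simp add: sum.reindex_bij_betw[OF g, symmetric])
  ultimately show ?thesis
    using sum_weak_compositions_fixed_on[OF N s(2)] distinct_card[OF s(1)] by simp
qed

lemma sum_weak_compositions_by_degrees_along:
  fixes N :: "nat set" and H :: "(nat \<Rightarrow> nat) \<Rightarrow> real"
  assumes N: "finite N" and s: "distinct s" "set s \<subseteq> N"
  shows "(\<Sum>d\<in>weak_compositions N L. (\<Prod>j\<in>N. pmf p (d j)) * H (degrees_along s d))
       = (\<Sum>k\<in>PiE_dflt {1..length s} 0 (\<lambda>_. {..L}). H k * (\<Prod>i\<in>{1..length s}. pmf p (k i))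
            * prob_Xi_plus_eq p (card N - length s) (\<Sum>i\<in>{1..length s}. k i) L)"
proof -
  let ?T = "PiE_dflt {1..length s} 0 (\<lambda>_. {..L})"
  have "degrees_along s d \<in> ?T" if d: "d \<in> weak_compositions N L" for d
  proof -
    have "d (s ! (i - 1)) \<le> L" if "i \<in> {1..length s}" for i
    proof -
      have "s ! (i - 1) \<in> N" using that s(2) by auto
      then show ?thesis
        using d N member_le_sum[of "s ! (i - 1)" N d] by (simp add: weak_compositions_def)
    qed
    then show ?thesis by (simp add: degrees_along_def PiE_dflt_def)
  qed
  then have "(\<Sum>d\<in>weak_compositions N L. (\<Prod>j\<in>N. pmf p (d j)) * H (degrees_along s d))
      = (\<Sum>k\<in>?T. \<Sum>d\<in>{d \<in> weak_compositions N L. degrees_along s d = k}. H k * (\<Prod>j\<in>N. pmf p (d j)))"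
    using N by (subst sum.group[symmetric, where g = "degrees_along s"])
      (auto simp: finite_weak_compositions mult.commute intro!: sum.cong)
  also have "\<dots> = (\<Sum>k\<in>?T. H k * (\<Prod>i\<in>{1..length s}. pmf p (k i))
            * prob_Xi_plus_eq p (card N - length s) (\<Sum>i\<in>{1..length s}. k i) L)"
  proof (intro sum.cong refl)
    fix k assume "k \<in> ?T"
    then have "i \<notin> {1..length s} \<Longrightarrow> k i = 0" for i
      by (simp add: PiE_dflt_def)
    from sum_weak_compositions_degrees_along_eq[where k = k, OF N s this]
    show "(\<Sum>d\<in>{d \<in> weak_compositions N L. degrees_along s d = k}. H k * (\<Prod>j\<in>N. pmf p (d j)))
        = H k * (\<Prod>i\<in>{1..length s}. pmf p (k i))
            * prob_Xi_plus_eq p (card N - length s) (\<Sum>i\<in>{1..length s}. k i) L"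
      by (simp add: mult.assoc flip: sum_distrib_left)
  qed
  finally show ?thesis .
qed

section \<open>The laws of D and (D, w)\<close>

lemma pmf_bind_map_Pair:
  "pmf (bind_pmf M (\<lambda>x. map_pmf (Pair x) (N x))) (x, y) = pmf M x * pmf (N x) y"
proof -
  have "pmf (map_pmf (Pair x') (N x')) (x, y) = indicator {x} x' * pmf (N x) y" for x'
    by (cases "x' = x") (auto simp: pmf_map_inj' inj_on_def pmf_eq_0_set_pmf)
  then show ?thesis
    by (simp add: pmf_bind measure_pmf_single)
qed

lemma D_pmf_condition_nonempty:
  assumes "pmf (Xi_pmf p n) (n - 1) > 0"
  shows "set_pmf (Pi_pmf {1..n} 0 (\<lambda>_. p)) \<inter> {d. (\<Sum>i\<in>{1..n}. d i) = n - 1} \<noteq> {}"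
proof
  let ?P = "Pi_pmf {1..n} 0 (\<lambda>_. p)" and ?A = "{d. (\<Sum>i\<in>{1..n}. d i) = n - 1}"
  assume "set_pmf ?P \<inter> ?A = {}"
  then have "measure ?P ?A = 0"
    using measure_Int_set_pmf[of ?P ?A] by (simp add: Int_commute)
  then show False
    using assms pmf_Xi_pmf_eq_measure_Pi_pmf[of "{1..n}" n p "n - 1"] by simp
qed

lemma set_pmf_D_pmf:
  assumes "pmf (Xi_pmf p n) (n - 1) > 0"
  shows "set_pmf (D_pmf p n) \<subseteq> weak_compositions {1..n} (n - 1)"
proof
  fix d assume "d \<in> set_pmf (D_pmf p n)"
  then have "d \<in> set_pmf (Pi_pmf {1..n} 0 (\<lambda>_. p))" "(\<Sum>i\<in>{1..n}. d i) = n - 1"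
    unfolding D_pmf_def set_cond_pmf[OF D_pmf_condition_nonempty[OF assms]] by auto
  then show "d \<in> weak_compositions {1..n} (n - 1)"
    using set_Pi_pmf_subset[of "{1..n}" 0 "\<lambda>_. p"] by (auto simp: weak_compositions_def)
qed

lemma pmf_D_pmf:
  assumes "pmf (Xi_pmf p n) (n - 1) > 0" and d: "d \<in> weak_compositions {1..n} (n - 1)"
  shows "pmf (D_pmf p n) d = (\<Prod>i\<in>{1..n}. pmf p (d i)) / pmf (Xi_pmf p n) (n - 1)"
proof -
  have "pmf (Pi_pmf {1..n} 0 (\<lambda>_. p)) d = (\<Prod>i\<in>{1..n}. pmf p (d i))"
    using d by (intro pmf_Pi') (auto simp: weak_compositions_def)
  then show ?thesis
    using d unfolding D_pmf_def pmf_cond[OF D_pmf_condition_nonempty[OF assms(1)]]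
    by (simp add: weak_compositions_def pmf_Xi_pmf_eq_measure_Pi_pmf[of "{1..n}" n])
qed

lemma expectation_Dw_pmf:
  assumes Z: "pmf (Xi_pmf p n) (n - 1) > 0"
  shows "measure_pmf.expectation (Dw_pmf p n) g
       = (\<Sum>d\<in>weak_compositions {1..n} (n - 1).
            pmf (D_pmf p n) d / card (words n d) * (\<Sum>w\<in>words n d. g (d, w)))"
proof -
  let ?D = "weak_compositions {1..n} (n - 1)"
  have words: "finite (words n d)" "words n d \<noteq> {}" if "d \<in> ?D" for d
    using that by (simp_all add: weak_compositions_def words_eq_permutations_of_multiset)
  have "set_pmf (Dw_pmf p n) \<subseteq> Product_Type.Sigma ?D (words n)"
    using set_pmf_D_pmf[OF Z] words by (auto simp: Dw_pmf_def)
  then have "measure_pmf.expectation (Dw_pmf p n) g = (\<Sum>x\<in>Product_Type.Sigma ?D (words n). g x * pmf (Dw_pmf p n) x)"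
    using words by (intro integral_measure_pmf_real) (auto simp: finite_weak_compositions)
  also have "\<dots> = (\<Sum>d\<in>?D. \<Sum>w\<in>words n d. g (d, w) * pmf (Dw_pmf p n) (d, w))"
    using words by (subst sum.Sigma) (auto simp: finite_weak_compositions)
  also have "\<dots> = (\<Sum>d\<in>?D. \<Sum>w\<in>words n d. pmf (D_pmf p n) d / card (words n d) * g (d, w))"
    using words by (intro sum.cong refl) (simp add: Dw_pmf_def pmf_bind_map_Pair)
  finally show ?thesis
    by (simp only: sum_distrib_left)
qed

lemma expectation_Dw_pmf_first_degrees:
  fixes F :: "(nat \<Rightarrow> real) \<Rightarrow> real"
  assumes Z: "pmf (Xi_pmf p n) (n - 1) > 0"
  shows "measure_pmf.expectation (Dw_pmf p n)
           (\<lambda>(d, w). F (\<lambda>i. if i \<in> {1..m} then real (Dhat d w i) else 0) * (if Nn n d \<ge> m then 1 else 0))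
       = (\<Sum>k\<in>PiE_dflt {1..m} 0 (\<lambda>_. {..n - 1}). F (\<lambda>i. real (k i)) *
           (card (distinct_lists {1..n} m) / pmf (Xi_pmf p n) (n - 1) * size_biased_pick_prob n m k
            * (\<Prod>i\<in>{1..m}. pmf p (k i)) * prob_Xi_plus_eq p (n - m) (\<Sum>i\<in>{1..m}. k i) (n - 1)))"
proof -
  let ?D = "weak_compositions {1..n} (n - 1)" and ?I = "distinct_lists {1..n} m"
  let ?Z = "pmf (Xi_pmf p n) (n - 1)"
  let ?H = "\<lambda>k. F (\<lambda>i. real (k i)) * size_biased_pick_prob n m k"
  let ?G = "\<lambda>k. ?H k * (\<Prod>i\<in>{1..m}. pmf p (k i)) * prob_Xi_plus_eq p (n - m) (\<Sum>i\<in>{1..m}. k i) (n - 1)"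
  have summand: "pmf (D_pmf p n) d / card (words n d)
        * (\<Sum>w\<in>words n d. F (\<lambda>i. if i \<in> {1..m} then real (Dhat d w i) else 0) * (if Nn n d \<ge> m then 1 else 0))
      = (\<Prod>i\<in>{1..n}. pmf p (d i)) / ?Z * (\<Sum>s\<in>?I. ?H (degrees_along s d))" if d: "d \<in> ?D" for d
  proof -
    have "card (words n d) \<noteq> 0"
      using d by (simp add: weak_compositions_def words_eq_permutations_of_multiset)
    then show ?thesis
      using d sum_words_first_degrees[where n = n and d = d and F = F and m = m]
      by (simp add: pmf_D_pmf[OF Z] weak_compositions_def mult.assoc)
  qed
  have "measure_pmf.expectation (Dw_pmf p n)
           (\<lambda>(d, w). F (\<lambda>i. if i \<in> {1..m} then real (Dhat d w i) else 0) * (if Nn n d \<ge> m then 1 else 0))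
      = (\<Sum>d\<in>?D. (\<Prod>i\<in>{1..n}. pmf p (d i)) / ?Z * (\<Sum>s\<in>?I. ?H (degrees_along s d)))"
    unfolding expectation_Dw_pmf[OF Z] prod.case by (rule sum.cong[OF refl summand])
  also have "\<dots> = (\<Sum>s\<in>?I. \<Sum>d\<in>?D. (\<Prod>i\<in>{1..n}. pmf p (d i)) * ?H (degrees_along s d)) / ?Z"
    by (subst sum.swap) (simp add: sum_distrib_left sum_divide_distrib mult_ac)
  also have "\<dots> = (\<Sum>s\<in>?I. \<Sum>k\<in>PiE_dflt {1..m} 0 (\<lambda>_. {..n - 1}). ?G k) / ?Z"
  proof -
    have "(\<Sum>d\<in>?D. (\<Prod>i\<in>{1..n}. pmf p (d i)) * ?H (degrees_along s d))
        = (\<Sum>k\<in>PiE_dflt {1..m} 0 (\<lambda>_. {..n - 1}). ?G k)" if "s \<in> ?I" for s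
      using that sum_weak_compositions_by_degrees_along[where N = "{1..n}" and L = "n - 1" and H = ?H]
      by (simp add: distinct_lists_def)
    then show ?thesis by simp
  qed
  finally show ?thesis
    by (simp add: sum_distrib_left sum_divide_distrib mult_ac)
qed

lemma pmf_size_biased:
  assumes "measure_pmf.expectation p real = 1"
  shows "pmf (size_biased p) k = k * pmf p k"
proof -
  have "integrable p real"
    using assms not_integrable_integral_eq by fastforce
  then have "(\<integral>\<^sup>+x. ennreal (real x * pmf p x) \<partial>count_space UNIV) = ennreal (measure_pmf.expectation p real)"
    unfolding nn_integral_measure_pmf[symmetric]
    by (subst nn_integral_eq_integral[symmetric]) (auto simp: nn_integral_measure_pmf ennreal_mult mult.commute)
  then show ?thesis
    unfolding size_biased_def using assms by (subst pmf_embed_pmf) auto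
qed

lemma expectation_Pi_pmf_size_biased:
  fixes G :: "(nat \<Rightarrow> nat) \<Rightarrow> real"
  assumes mean: "measure_pmf.expectation p real = 1" and I: "finite I"
    and G: "\<And>k. G k \<noteq> 0 \<Longrightarrow> (\<Sum>i\<in>I. k i) \<le> L"
  shows "measure_pmf.expectation (Pi_pmf I 0 (\<lambda>_. size_biased p)) G
       = (\<Sum>k\<in>PiE_dflt I 0 (\<lambda>_. {..L}). G k * (\<Prod>i\<in>I. real (k i) * pmf p (k i)))"
proof -
  let ?P = "Pi_pmf I 0 (\<lambda>_. size_biased p)"
  have "measure_pmf.expectation ?P G = (\<Sum>k\<in>PiE_dflt I 0 (\<lambda>_. {..L}). G k * pmf ?P k)"
  proof (rule integral_measure_pmf_real)
    fix k assume k: "k \<in> set_pmf ?P" "G k \<noteq> 0"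
    have "k i \<le> L" if "i \<in> I" for i
      using G[OF k(2)] member_le_sum[OF that, of k] I by simp
    then show "k \<in> PiE_dflt I 0 (\<lambda>_. {..L})"
      using set_Pi_pmf_subset[OF I, of 0 "\<lambda>_. size_biased p"] k(1) by (auto simp: PiE_dflt_def)
  qed (use I in auto)
  also have "\<dots> = (\<Sum>k\<in>PiE_dflt I 0 (\<lambda>_. {..L}). G k * (\<Prod>i\<in>I. real (k i) * pmf p (k i)))"
    using I by (intro sum.cong refl) (simp add: PiE_dflt_def pmf_Pi' pmf_size_biased[OF mean])
  finally show ?thesis .
qed

lemma size_biased_pick_prob_mult_eq_Theta:
  assumes "m \<le> n"
  shows "card (distinct_lists {1..n} m) / pmf (Xi_pmf p n) (n - 1) * size_biased_pick_prob n m k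
         * (\<Prod>i\<in>{1..m}. pmf p (k i)) * prob_Xi_plus_eq p (n - m) (\<Sum>i\<in>{1..m}. k i) (n - 1)
       = Theta p n m k * (\<Prod>i\<in>{1..m}. real (k i) * pmf p (k i))"
  unfolding Theta_def size_biased_pick_prob_def prob_Xi_plus_eq_def
    real_card_distinct_lists_atLeastAtMost[OF assms] prod_dividef prod.distrib
  by (simp add: field_simps)

theorem proposition3p3:
  fixes p :: "nat pmf" and n m :: nat and f :: "(nat \<Rightarrow> real) \<Rightarrow> real"
  assumes mean: "measure_pmf.expectation p real = 1"
    and aper: "Gcd (set_pmf p) = 1"
    and npos: "pmf (Xi_pmf p n) (n - 1) > 0"
    and m: "1 \<le> m" "m < n"
    and fcont: "continuous_on (Rm m) f"
    and fbdd: "bounded (f ` Rm m)"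
  shows "measure_pmf.expectation (Dw_pmf p n)
           (\<lambda>(d, w). f (\<lambda>i. if i \<in> {1..m} then real (Dhat d w i) else 0)
                     * (if Nn n d \<ge> m then 1 else 0))
       = measure_pmf.expectation (Pi_pmf {1..m} 0 (\<lambda>_. size_biased p))
           (\<lambda>k. f (\<lambda>i. real (k i)) * Theta p n m k)"
proof -
  have mn: "m \<le> n" using m by simp
  have "measure_pmf.expectation (Dw_pmf p n)
          (\<lambda>(d, w). f (\<lambda>i. if i \<in> {1..m} then real (Dhat d w i) else 0) * (if Nn n d \<ge> m then 1 else 0))
      = (\<Sum>k\<in>PiE_dflt {1..m} 0 (\<lambda>_. {..n - 1}).
           f (\<lambda>i. real (k i)) * Theta p n m k * (\<Prod>i\<in>{1..m}. real (k i) * pmf p (k i)))"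
    unfolding expectation_Dw_pmf_first_degrees[OF npos] size_biased_pick_prob_mult_eq_Theta[OF mn]
    by (simp only: mult.assoc)
  also have "\<dots> = measure_pmf.expectation (Pi_pmf {1..m} 0 (\<lambda>_. size_biased p))
                    (\<lambda>k. f (\<lambda>i. real (k i)) * Theta p n m k)"
    by (rule expectation_Pi_pmf_size_biased[OF mean, symmetric]) (auto simp: Theta_def split: if_splits)
  finally show ?thesis .
qed

end
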